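(* Let $\mathcal{D}$ be a dictionary over a finite alphabet $\mathscr{A}$ with GAP-graphs $(\mathscr{G}_k)_{k\in\mathbb{N}}$. If $\mathscr{G}_{k_0}$ is strongly connected for some $k_0\in\mathbb{N}$, then $\mathscr{G}_k$ is strongly connected for every $k\leq k_0$. In particular, if $\mathscr{G}_{l_0}$ is not strongly connected, then $\mathscr{G}_l$ is not strongly connected for every $l\geq l_0$.
   Context: A dictionary is a non-empty set $\mathcal{D}$ of finite words over $\mathscr{A}$ containing the empty word, closed under taking subwords, and such that for each $u\in\mathcal{D}$ there are letters $a,b$ with $aub\in\mathcal{D}$. The GAP-graph $\mathscr{G}_k$ is the oriented graph with vertex set $\mathcal{D}\cap\mathscr{A}^k$, edge set $\mathcal{D}\cap\mathscr{A}^{k+1}$, the edge $a_0\cdots a_k$ going from $a_0\cdots a_{k-1}$ to $a_1\cdots a_k$. A path is a sequence of edges with the end of each equal to the origin of the next; an oriented graph is strongly connected if for any two vertices $u,v$ there are paths from $u$ to $v$ and from $v$ to $u$. *)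

theory Defs
  imports Main "HOL-Library.Sublist"
begin

text \<open>Words over the alphabet A are lists with letters in A; "subword" means
  contiguous factor (library notion sublist).\<close>

definition dictionary :: "'a set \<Rightarrow> 'a list set \<Rightarrow> bool" where
  "dictionary A D \<longleftrightarrow>
     D \<noteq> {} \<and> D \<subseteq> lists A \<and> [] \<in> D \<and>
     (\<forall>u\<in>D. \<forall>v. sublist v u \<longrightarrow> v \<in> D) \<and>
     (\<forall>u\<in>D. \<exists>a\<in>A. \<exists>b\<in>A. a # u @ [b] \<in> D)"

text \<open>GAP-graph G_k: vertices are words of D of length k, edges are words of D of
  length k+1; the edge a0...ak goes from a0...a(k-1) (= butlast) to a1...ak (= tl).\<close>

definition gap_vertices :: "'a list set \<Rightarrow> nat \<Rightarrow> 'a list set" where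
  "gap_vertices D k = {u \<in> D. length u = k}"

definition gap_edges :: "'a list set \<Rightarrow> nat \<Rightarrow> 'a list set" where
  "gap_edges D k = {w \<in> D. length w = Suc k}"

definition edge_origin :: "'a list \<Rightarrow> 'a list" where
  "edge_origin w = butlast w"

definition edge_end :: "'a list \<Rightarrow> 'a list" where
  "edge_end w = tl w"

definition gap_path :: "'a list set \<Rightarrow> nat \<Rightarrow> 'a list list \<Rightarrow> 'a list \<Rightarrow> 'a list \<Rightarrow> bool" where
  "gap_path D k es u v \<longleftrightarrow>
     es \<noteq> [] \<and> set es \<subseteq> gap_edges D k \<and>
     edge_origin (hd es) = u \<and> edge_end (last es) = v \<and>
     (\<forall>i. Suc i < length es \<longrightarrow> edge_end (es ! i) = edge_origin (es ! Suc i))"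

definition gap_strongly_connected :: "'a list set \<Rightarrow> nat \<Rightarrow> bool" where
  "gap_strongly_connected D k \<longleftrightarrow>
     (\<forall>u\<in>gap_vertices D k. \<forall>v\<in>gap_vertices D k.
        (\<exists>es. gap_path D k es u v) \<and> (\<exists>es. gap_path D k es v u))"

end

theory Submission
  imports Defs
begin

text \<open>Deleting the last letter of every edge of a path in the GAP-graph of
  level k+1 yields a path in the graph of level k between the truncated endpoints.
  Since every word of the dictionary extends to the right, every vertex of level k
  is such a truncation, so strong connectivity passes from level k+1 to level k,
  and by induction to all lower levels.\<close>

lemma dictionary_butlast_closed:
  assumes "dictionary A D" and "w \<in> D"
  shows "butlast w \<in> D"
  using assms unfolding dictionary_def by blast

lemma dictionary_extends_right:
  assumes "dictionary A D" and "u \<in> D"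
  obtains b where "u @ [b] \<in> D"
proof -
  obtain a b where "a # u @ [b] \<in> D"
    using assms unfolding dictionary_def by blast
  moreover have "sublist (u @ [b]) (a # u @ [b])"
    using sublist_append_leftI[of _ "[a]"] by simp
  ultimately show thesis
    using assms(1) that unfolding dictionary_def by blast
qed

lemma gap_path_map_butlast:
  assumes butlast_closed: "\<And>w. w \<in> D \<Longrightarrow> butlast w \<in> D"
    and path: "gap_path D (Suc k) es u v"
  shows "gap_path D k (map butlast es) (butlast u) (butlast v)"
proof -
  have nonempty: "es \<noteq> []" and edges: "set es \<subseteq> gap_edges D (Suc k)"
    and origin: "butlast (hd es) = u" and target: "tl (last es) = v"
    and chain: "\<And>i. Suc i < length es \<Longrightarrow> tl (es ! i) = butlast (es ! Suc i)"
    using path unfolding gap_path_def edge_origin_def edge_end_def by auto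
  have "set (map butlast es) \<subseteq> gap_edges D k"
    using edges butlast_closed unfolding gap_edges_def by auto
  moreover have "tl (butlast (last es)) = butlast v"
    using target by (simp flip: butlast_tl)
  moreover have "tl (butlast (es ! i)) = butlast (butlast (es ! Suc i))"
    if "Suc i < length es" for i
    using chain[OF that] by (simp flip: butlast_tl)
  ultimately show ?thesis
    using nonempty origin
    unfolding gap_path_def edge_origin_def edge_end_def by (simp add: hd_map last_map)
qed

lemma gap_strongly_connected_Suc_imp:
  assumes dict: "dictionary A D" and sc: "gap_strongly_connected D (Suc k)"
  shows "gap_strongly_connected D k"
proof -
  have extend: "\<exists>b. u @ [b] \<in> gap_vertices D (Suc k)" if "u \<in> gap_vertices D k" for u
  proof -
    from that have "u \<in> D" and "length u = k" by (simp_all add: gap_vertices_def)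
    with dictionary_extends_right[OF dict] show ?thesis by (auto simp: gap_vertices_def)
  qed
  have "\<exists>es. gap_path D k es u v"
    if u: "u \<in> gap_vertices D k" and v: "v \<in> gap_vertices D k" for u v
  proof -
    obtain b c where "u @ [b] \<in> gap_vertices D (Suc k)" and "v @ [c] \<in> gap_vertices D (Suc k)"
      using extend[OF u] extend[OF v] by blast
    with sc obtain es where "gap_path D (Suc k) es (u @ [b]) (v @ [c])"
      unfolding gap_strongly_connected_def by blast
    from gap_path_map_butlast[OF dictionary_butlast_closed[OF dict] this] show ?thesis
      by auto
  qed
  then show ?thesis unfolding gap_strongly_connected_def by blast
qed

lemma gap_strongly_connected_antimono:
  assumes "dictionary A D" and "k \<le> k0" and "gap_strongly_connected D k0"
  shows "gap_strongly_connected D k"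
  using assms(2,3)
  by (induction rule: inc_induct) (auto intro: gap_strongly_connected_Suc_imp[OF assms(1)])

theorem proposition7:
  fixes A :: "'a set" and D :: "'a list set" and k0 l0 :: nat
  assumes "finite A" and "dictionary A D"
  shows "(gap_strongly_connected D k0 \<longrightarrow> (\<forall>k\<le>k0. gap_strongly_connected D k)) \<and>
         (\<not> gap_strongly_connected D l0 \<longrightarrow> (\<forall>l\<ge>l0. \<not> gap_strongly_connected D l))"
  using gap_strongly_connected_antimono[OF assms(2)] by blast

end
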